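(* Let $\{A_j\}_{j=1}^m$ be Hermitian $n\times n$ matrices and $n\geq r$. If the map $\beta:\mathbb{C}^{n\times r}/U(r)\to\mathbb{R}^m$, $\beta_j(z)=\mathrm{Re}\,\mathrm{tr}(A_jzz^* )$, is injective, then $$a_0=\inf\Big\{\frac{\|\beta(x)-\beta(y)\|_2^2}{\|xx^*-yy^*\|_2^2}: x,y\in\mathbb{C}^{n\times r},\ xx^*\neq yy^*\Big\}>0.$$
   Context: $\mathbb{C}^{n\times r}/U(r)$ is the set of classes under $x\sim y$ iff $x=yU$ with $U$ unitary; $\beta$ is well defined on classes. $\|\cdot\|_2$ is the Euclidean/Frobenius norm. *)

theory Defs
  imports "HOL-Analysis.Analysis"
begin

definition cadj :: "complex^'n^'m \<Rightarrow> complex^'m^'n" where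
  "cadj A = (\<chi> i j. cnj (A $ j $ i))"

definition hermitian :: "complex^'n^'n \<Rightarrow> bool" where
  "hermitian A \<longleftrightarrow> cadj A = A"

definition unitary_mat :: "complex^'r^'r \<Rightarrow> bool" where
  "unitary_mat U \<longleftrightarrow> cadj U ** U = mat 1 \<and> U ** cadj U = mat 1"

definition ctrace :: "complex^'n^'n \<Rightarrow> complex" where
  "ctrace A = (\<Sum>i\<in>UNIV. A $ i $ i)"

definition frob_sq :: "complex^'n^'m \<Rightarrow> real" where
  "frob_sq A = (\<Sum>i\<in>UNIV. \<Sum>j\<in>UNIV. (cmod (A $ i $ j))\<^sup>2)"

definition unitary_equiv :: "complex^'r^'n \<Rightarrow> complex^'r^'n \<Rightarrow> bool" where
  "unitary_equiv x y \<longleftrightarrow> (\<exists>U::complex^'r^'r. unitary_mat U \<and> x = y ** U)"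

definition beta :: "(nat \<Rightarrow> complex^'n^'n) \<Rightarrow> nat \<Rightarrow> complex^'r^'n \<Rightarrow> real" where
  "beta A j z = Re (ctrace (A j ** (z ** cadj z)))"

definition beta_injective :: "(nat \<Rightarrow> complex^'n^'n) \<Rightarrow> nat \<Rightarrow> 'r::finite itself \<Rightarrow> bool" where
  "beta_injective A m _ \<longleftrightarrow>
     (\<forall>x y :: complex^'r^'n. (\<forall>j<m. beta A j x = beta A j y) \<longrightarrow> unitary_equiv x y)"

end

theory Submission
  imports Defs
begin

(* The quotient depends only on D = xx* - yy* and is invariant under rescaling (x, y).
   Every such D has a representative with x*y = 0: in a pair of minimal norm within the fibre
   of D, a column of x not orthogonal to a column of y could be hyperbolically rotated against
   it, preserving D but decreasing |x|^2 + |y|^2. Orthogonal pairs of norm 1 form a compact set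
   on which D is nonzero, and injectivity of beta makes the quotient positive there, so it has a
   positive minimum. *)

lemma power2_norm_vec: "(norm v)\<^sup>2 = (\<Sum>i\<in>UNIV. (norm (v $ i))\<^sup>2)"
  by (simp add: norm_vec_def L2_set_def sum_nonneg)

lemma frob_sq_eq_power2_norm: "frob_sq x = (norm x)\<^sup>2"
  by (simp add: frob_sq_def power2_norm_vec)

lemma power2_norm_Pair: "(norm (a, b))\<^sup>2 = (norm a)\<^sup>2 + (norm b)\<^sup>2"
  by (simp add: norm_Pair)

lemma cadj_cadj [simp]: "cadj (cadj x) = x"
  by (simp add: cadj_def vec_eq_iff)

lemma cadj_matrix_mult: "cadj (x ** y) = cadj y ** cadj x"
  by (simp add: vec_eq_iff cadj_def matrix_matrix_mult_def mult.commute)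

lemma cadj_zero [simp]: "cadj 0 = 0"
  by (simp add: cadj_def vec_eq_iff)

lemma cadj_matrix_mult_nth: "(cadj x ** y) $ p $ q = (\<Sum>i\<in>UNIV. cnj (x $ i $ p) * y $ i $ q)"
  by (simp add: matrix_matrix_mult_def cadj_def)

lemma cadj_scaleR: "cadj (t *\<^sub>R x) = t *\<^sub>R cadj x"
  by (simp add: cadj_def vec_eq_iff)

lemma continuous_on_cadj [continuous_intros]:
  "continuous_on S f \<Longrightarrow> continuous_on S (\<lambda>p. cadj (f p))"
  unfolding cadj_def by (intro continuous_intros)

lemma continuous_on_matrix_mult [continuous_intros]:
  fixes f :: "_ \<Rightarrow> 'a::real_normed_algebra_1^'n^'m"
  shows "continuous_on S f \<Longrightarrow> continuous_on S g \<Longrightarrow> continuous_on S (\<lambda>p. f p ** g p)"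
  unfolding matrix_matrix_mult_def by (intro continuous_intros)

definition gram :: "complex^'r^'n \<Rightarrow> complex^'n^'n" where
  "gram x = x ** cadj x"

lemma gram_nth: "gram x $ i $ j = (\<Sum>k\<in>UNIV. x $ i $ k * cnj (x $ j $ k))"
  by (simp add: gram_def matrix_matrix_mult_def cadj_def)

lemma cadj_gram [simp]: "cadj (gram x) = gram x"
  by (simp add: gram_def cadj_matrix_mult)

lemma gram_scaleR: "gram (t *\<^sub>R x) = t\<^sup>2 *\<^sub>R gram x"
  unfolding vec_eq_iff gram_nth vector_scaleR_component
  by (simp add: scaleR_conv_of_real sum_distrib_left power2_eq_square algebra_simps)

lemma gram_diag: "gram x $ i $ i = of_real ((norm (x $ i))\<^sup>2)"
  unfolding gram_nth power2_norm_vec of_real_sum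
  by (intro sum.cong refl) (metis complex_norm_square)

lemma gram_zero [simp]: "gram 0 = 0"
  by (simp add: gram_def)

lemma gram_eq_0_iff [simp]: "gram x = 0 \<longleftrightarrow> x = 0"
proof
  assume "gram x = 0"
  then have "norm (x $ i) = 0" for i
    using gram_diag[of x i] by simp
  then show "x = 0" by (simp add: vec_eq_iff)
qed simp

lemma gram_eq_orth_imp_zero:
  fixes x y :: "complex^'r^'n"
  assumes orth: "cadj x ** y = 0" and eq: "gram x = gram y"
  shows "x = 0 \<and> y = 0"
proof -
  have "gram (gram x) = gram x ** gram x"
    by (simp add: gram_def[of "gram x"])
  also have "\<dots> = gram y ** gram x"
    by (simp only: eq)
  also have "\<dots> = y ** cadj (cadj x ** y) ** cadj x"
    by (simp add: gram_def cadj_matrix_mult matrix_mul_assoc)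
  finally have "gram x = 0" using orth by simp
  with eq show ?thesis by simp
qed

lemma continuous_on_gram [continuous_intros]:
  "continuous_on S f \<Longrightarrow> continuous_on S (\<lambda>p. gram (f p))"
  unfolding gram_def by (intro continuous_intros)

lemma hyperbolic_rotation_outer_diff:
  fixes c s :: real and \<omega> a1 a2 b1 b2 :: complex
  assumes "c\<^sup>2 - s\<^sup>2 = 1" "\<omega> * cnj \<omega> = 1"
  shows "(c * a1 + s * \<omega> * b1) * cnj (c * a2 + s * \<omega> * b2)
       - (s * cnj \<omega> * a1 + c * b1) * cnj (s * cnj \<omega> * a2 + c * b2)
       = a1 * cnj a2 - b1 * cnj b2"
proof -
  have "(of_real c)\<^sup>2 - (of_real s)\<^sup>2 = (1::complex)"
    using assms(1) by (metis of_real_1 of_real_diff of_real_power)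
  then show ?thesis using assms(2) by (simp add: algebra_simps) algebra
qed

lemma hyperbolic_rotation_norm_sq:
  fixes c s :: real and \<omega> a b :: complex
  assumes "cmod \<omega> = 1"
  shows "(cmod (c * a + s * \<omega> * b))\<^sup>2 + (cmod (s * cnj \<omega> * a + c * b))\<^sup>2
       = (c\<^sup>2 + s\<^sup>2) * ((cmod a)\<^sup>2 + (cmod b)\<^sup>2) + 4 * c * s * Re (cnj \<omega> * a * cnj b)"
proof -
  have "(Re \<omega>)\<^sup>2 + (Im \<omega>)\<^sup>2 = 1" using assms by (simp add: cmod_def)
  then show ?thesis unfolding cmod_power2 by (simp add: power2_eq_square algebra_simps) algebra
qed

lemma hyperbolic_rotation_decreases_norm:
  fixes a b :: "'n::finite \<Rightarrow> complex"
  assumes "(\<Sum>i\<in>UNIV. a i * cnj (b i)) \<noteq> 0"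
  obtains a' b' where
    "\<And>i j. a' i * cnj (a' j) - b' i * cnj (b' j) = a i * cnj (a j) - b i * cnj (b j)"
    "(\<Sum>i\<in>UNIV. (cmod (a' i))\<^sup>2 + (cmod (b' i))\<^sup>2) < (\<Sum>i\<in>UNIV. (cmod (a i))\<^sup>2 + (cmod (b i))\<^sup>2)"
proof -
  define w where "w = (\<Sum>i\<in>UNIV. a i * cnj (b i))"
  define N where "N = (\<Sum>i\<in>UNIV. (cmod (a i))\<^sup>2 + (cmod (b i))\<^sup>2)"
  have w: "w \<noteq> 0" using assms by (simp add: w_def)
  then obtain i0 where "a i0 * cnj (b i0) \<noteq> 0"
    unfolding w_def by (meson sum.neutral)
  then have N: "N > 0"
    unfolding N_def by (intro sum_pos2[of UNIV i0]) (auto intro: add_pos_nonneg)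
  \<comment> \<open>\<open>\<omega>\<close> turns the cross term into \<open>-|w|\<close>; any small \<open>s > 0\<close> would do, and
    \<open>s = |w| / N\<close> makes the decrease explicit.\<close>
  define \<omega> where "\<omega> = - w / cmod w"
  have "cnj w * w = cmod w * cmod w"
    by (metis complex_norm_square mult.commute of_real_mult power2_eq_square)
  then have \<omega>_w: "cnj \<omega> * w = - cmod w"
    using w by (simp add: \<omega>_def)
  have \<omega>: "cmod \<omega> = 1" using w by (simp add: \<omega>_def norm_divide)
  then have \<omega>': "\<omega> * cnj \<omega> = 1" by (simp add: complex_norm_square[symmetric])
  define s where "s = cmod w / N"
  define c where "c = sqrt (1 + s\<^sup>2)"
  have s: "s > 0" and sN: "s * N = cmod w" using N w by (simp_all add: s_def)
  have cs: "c\<^sup>2 = 1 + s\<^sup>2" and c: "c \<ge> 1" by (simp_all add: c_def add_nonneg_nonneg)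
  define a' where "a' i = c * a i + s * \<omega> * b i" for i
  define b' where "b' i = s * cnj \<omega> * a i + c * b i" for i
  show thesis
  proof
    show "a' i * cnj (a' j) - b' i * cnj (b' j) = a i * cnj (a j) - b i * cnj (b j)" for i j
      unfolding a'_def b'_def by (rule hyperbolic_rotation_outer_diff) (use cs \<omega>' in auto)
    have "(\<Sum>i\<in>UNIV. (cmod (a' i))\<^sup>2 + (cmod (b' i))\<^sup>2)
        = (\<Sum>i\<in>UNIV. (c\<^sup>2 + s\<^sup>2) * ((cmod (a i))\<^sup>2 + (cmod (b i))\<^sup>2)
                       + 4 * c * s * Re (cnj \<omega> * a i * cnj (b i)))"
      unfolding a'_def b'_def using \<omega> by (simp add: hyperbolic_rotation_norm_sq)
    also have "\<dots> = (c\<^sup>2 + s\<^sup>2) * N + 4 * c * s * Re (cnj \<omega> * w)"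
    proof -
      have "(\<Sum>i\<in>UNIV. Re (cnj \<omega> * a i * cnj (b i))) = Re (cnj \<omega> * w)"
        by (simp only: w_def mult.assoc sum_distrib_left Re_sum)
      then show ?thesis
        by (simp add: N_def sum.distrib flip: sum_distrib_left)
    qed
    also have "\<dots> = N - 2 * (2 * c - 1) * s\<^sup>2 * N"
      using \<omega>_w cs sN by (simp add: power2_eq_square algebra_simps)
    also have "\<dots> < N" using c s N by simp
    finally show "(\<Sum>i\<in>UNIV. (cmod (a' i))\<^sup>2 + (cmod (b' i))\<^sup>2)
        < (\<Sum>i\<in>UNIV. (cmod (a i))\<^sup>2 + (cmod (b i))\<^sup>2)"
      by (simp only: N_def)
  qed
qed

definition col_upd :: "'a^'n^'m \<Rightarrow> 'n \<Rightarrow> ('m \<Rightarrow> 'a) \<Rightarrow> 'a^'n^'m" where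
  "col_upd x p v = (\<chi> i k. if k = p then v i else x $ i $ k)"

lemma sum_if_eq_update:
  fixes f :: "'k::finite \<Rightarrow> 'a::ab_group_add"
  shows "(\<Sum>k\<in>UNIV. if k = p then a else f k) = (\<Sum>k\<in>UNIV. f k) - f p + a"
  by (simp add: sum.delta_remove sum.remove[of UNIV p f])

lemma gram_col_upd:
  "gram (col_upd x p v) $ i $ j = gram x $ i $ j - x $ i $ p * cnj (x $ j $ p) + v i * cnj (v j)"
proof -
  have "gram (col_upd x p v) $ i $ j
      = (\<Sum>k\<in>UNIV. if k = p then v i * cnj (v j) else x $ i $ k * cnj (x $ j $ k))"
    unfolding gram_nth col_upd_def by (rule sum.cong) auto
  then show ?thesis by (simp add: sum_if_eq_update gram_nth)
qed

lemma power2_norm_col_upd: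
  "(norm (col_upd x p v))\<^sup>2
     = (norm x)\<^sup>2 - (\<Sum>i\<in>UNIV. (norm (x $ i $ p))\<^sup>2) + (\<Sum>i\<in>UNIV. (norm (v i))\<^sup>2)"
proof -
  have "(norm (col_upd x p v))\<^sup>2
      = (\<Sum>i\<in>UNIV. \<Sum>k\<in>UNIV. if k = p then (norm (v i))\<^sup>2 else (norm (x $ i $ k))\<^sup>2)"
    unfolding power2_norm_vec col_upd_def by (intro sum.cong) auto
  also have "\<dots> = (\<Sum>i\<in>UNIV. (norm (x $ i))\<^sup>2 - (norm (x $ i $ p))\<^sup>2 + (norm (v i))\<^sup>2)"
    by (simp add: sum_if_eq_update power2_norm_vec)
  finally show ?thesis by (simp add: sum.distrib sum_subtractf power2_norm_vec[of x])
qed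

lemma gram_diff_shorter_representative:
  fixes x y :: "complex^'r^'n"
  assumes "cadj x ** y \<noteq> 0"
  obtains x' y' :: "complex^'r^'n"
  where "gram x' - gram y' = gram x - gram y" "norm (x', y') < norm (x, y)"
proof -
  obtain p q where pq: "(cadj x ** y) $ p $ q \<noteq> 0"
    using assms by (auto simp: vec_eq_iff)
  define a where "a i = x $ i $ p" for i
  define b where "b i = y $ i $ q" for i
  have "(\<Sum>i\<in>UNIV. a i * cnj (b i)) = cnj ((cadj x ** y) $ p $ q)"
    by (simp add: a_def b_def cadj_matrix_mult_nth mult.commute)
  with pq have "(\<Sum>i\<in>UNIV. a i * cnj (b i)) \<noteq> 0" by simp
  then obtain a' b' where
    outer: "\<And>i j. a' i * cnj (a' j) - b' i * cnj (b' j) = a i * cnj (a j) - b i * cnj (b j)" and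
    norm: "(\<Sum>i\<in>UNIV. (cmod (a' i))\<^sup>2 + (cmod (b' i))\<^sup>2)
           < (\<Sum>i\<in>UNIV. (cmod (a i))\<^sup>2 + (cmod (b i))\<^sup>2)"
    using hyperbolic_rotation_decreases_norm by blast
  define x' where "x' = col_upd x p a'"
  define y' where "y' = col_upd y q b'"
  show thesis
  proof
    have "gram x' $ i $ j - gram y' $ i $ j = gram x $ i $ j - gram y $ i $ j" for i j
      using outer[of i j]
      by (simp add: x'_def y'_def gram_col_upd flip: a_def b_def) (simp add: algebra_simps)
    then show "gram x' - gram y' = gram x - gram y"
      by (simp add: vec_eq_iff)
    have "(norm (x', y'))\<^sup>2 < (norm (x, y))\<^sup>2"
      using norm
      by (simp add: power2_norm_Pair x'_def y'_def power2_norm_col_upd sum.distrib flip: a_def b_def)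
    then show "norm (x', y') < norm (x, y)"
      by (simp add: power_less_imp_less_base)
  qed
qed

lemma gram_diff_orth_representative:
  fixes x y :: "complex^'r^'n"
  obtains x' y' :: "complex^'r^'n"
  where "gram x' - gram y' = gram x - gram y" "cadj x' ** y' = 0"
proof -
  define F :: "((complex^'r^'n) \<times> (complex^'r^'n)) set"
    where "F = cball 0 (norm (x, y)) \<inter> {p. gram (fst p) - gram (snd p) = gram x - gram y}"
  have "compact F"
    unfolding F_def by (intro compact_Int_closed compact_cball closed_Collect_eq continuous_intros)
  moreover have "F \<noteq> {}" by (auto simp: F_def)
  ultimately obtain p0 where p0: "p0 \<in> F" and min: "\<And>p. p \<in> F \<Longrightarrow> norm p0 \<le> norm p"
    using continuous_attains_inf[OF _ _ continuous_on_norm_id] by meson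
  have "cadj (fst p0) ** snd p0 = 0"
  proof (rule ccontr)
    assume "cadj (fst p0) ** snd p0 \<noteq> 0"
    then obtain x' y' :: "complex^'r^'n"
      where fiber: "gram x' - gram y' = gram (fst p0) - gram (snd p0)"
        and shorter: "norm (x', y') < norm p0"
      by (rule gram_diff_shorter_representative) auto
    have "norm p0 \<le> norm (x, y)" using p0 by (simp add: F_def)
    with fiber shorter p0 have "(x', y') \<in> F" by (simp add: F_def)
    with min[of "(x', y')"] shorter show False by simp
  qed
  with p0 show thesis by (intro that[of "fst p0" "snd p0"]) (simp_all add: F_def)
qed

lemma linear_Re_ctrace_mult: "linear (\<lambda>D. Re (ctrace (B ** D)))"
proof (rule linearI)
  show "Re (ctrace (B ** (D1 + D2))) = Re (ctrace (B ** D1)) + Re (ctrace (B ** D2))" for D1 D2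
    by (simp add: matrix_add_ldistrib ctrace_def sum.distrib)
  show "Re (ctrace (B ** (r *\<^sub>R D))) = r *\<^sub>R Re (ctrace (B ** D))" for r D
    by (simp add: matrix_scalar_ac ctrace_def sum_distrib_left flip: scalar_matrix_assoc)
qed

lemma beta_diff: "beta A j x - beta A j y = Re (ctrace (A j ** (gram x - gram y)))"
  by (simp add: beta_def gram_def linear_diff[OF linear_Re_ctrace_mult])

lemma gram_eq_if_unitary_equiv:
  assumes "unitary_equiv x y"
  shows "gram x = gram y"
proof -
  obtain U where U: "unitary_mat U" "x = y ** U"
    using assms by (auto simp: unitary_equiv_def)
  then have "gram x = y ** (U ** cadj U) ** cadj y"
    by (simp add: gram_def cadj_matrix_mult matrix_mul_assoc)
  with U(1) show ?thesis by (simp add: unitary_mat_def gram_def)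
qed

lemma gram_eq_if_beta_injective:
  fixes x y :: "complex^'r^'n"
  assumes "beta_injective A m TYPE('r)"
    and "\<And>j. j < m \<Longrightarrow> Re (ctrace (A j ** (gram x - gram y))) = 0"
  shows "gram x = gram y"
  using assms by (intro gram_eq_if_unitary_equiv) (simp add: beta_injective_def flip: beta_diff)

definition meas_ratio :: "(nat \<Rightarrow> complex^'n^'n) \<Rightarrow> nat \<Rightarrow> complex^'n^'n \<Rightarrow> real" where
  "meas_ratio A m D = (\<Sum>j<m. (Re (ctrace (A j ** D)))\<^sup>2) / (norm D)\<^sup>2"

lemma meas_ratio_scaleR: "t \<noteq> 0 \<Longrightarrow> meas_ratio A m (t *\<^sub>R D) = meas_ratio A m D"
  by (simp add: meas_ratio_def linear_scale[OF linear_Re_ctrace_mult] power_mult_distrib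
      flip: sum_distrib_left)

lemma meas_ratio_pos:
  fixes x y :: "complex^'r^'n"
  assumes "beta_injective A m TYPE('r)" and "gram x \<noteq> gram y"
  shows "meas_ratio A m (gram x - gram y) > 0"
proof -
  obtain j where "j < m" "Re (ctrace (A j ** (gram x - gram y))) \<noteq> 0"
    using gram_eq_if_beta_injective[OF assms(1)] assms(2) by blast
  then have "(\<Sum>j<m. (Re (ctrace (A j ** (gram x - gram y))))\<^sup>2) > 0"
    by (intro sum_pos2[of _ j]) auto
  with assms(2) show ?thesis by (simp add: meas_ratio_def)
qed

lemma continuous_on_meas_ratio [continuous_intros]:
  assumes "continuous_on S f" and "\<And>p. p \<in> S \<Longrightarrow> f p \<noteq> 0"
  shows "continuous_on S (\<lambda>p. meas_ratio A m (f p))"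
  unfolding meas_ratio_def ctrace_def using assms by (intro continuous_intros) auto

lemma meas_ratio_lower_bound_orth_sphere:
  assumes inj: "beta_injective A m TYPE('r)"
  obtains c where "c > 0" and "\<And>(x::complex^'r^'n) (y::complex^'r^'n). cadj x ** y = 0
      \<Longrightarrow> norm (x, y) = 1 \<Longrightarrow> c \<le> meas_ratio A m (gram x - gram y)"
proof -
  define T :: "((complex^'r^'n) \<times> (complex^'r^'n)) set"
    where "T = sphere 0 1 \<inter> {p. cadj (fst p) ** snd p = 0}"
  define h where "h p = meas_ratio A m (gram (fst p) - gram (snd p))"
    for p :: "(complex^'r^'n) \<times> (complex^'r^'n)"
  have ne: "gram (fst p) \<noteq> gram (snd p)" if "p \<in> T" for p
    using that gram_eq_orth_imp_zero[of "fst p" "snd p"] by (cases p) (auto simp: T_def)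
  obtain c where c: "c > 0" and bound: "\<And>p. p \<in> T \<Longrightarrow> c \<le> h p"
  proof (cases "T = {}")
    case True
    then show thesis using that[of 1] by simp
  next
    case False
    have "compact T"
      unfolding T_def by (intro compact_Int_closed compact_sphere closed_Collect_eq continuous_intros)
    moreover have "continuous_on T h"
      unfolding h_def using ne by (intro continuous_intros) auto
    ultimately obtain p0 where "p0 \<in> T" and "\<forall>p\<in>T. h p0 \<le> h p"
      using continuous_attains_inf False by meson
    then show thesis using that[of "h p0"] meas_ratio_pos[OF inj ne] by (simp add: h_def)
  qed
  show thesis
  proof (rule that[OF c])
    show "c \<le> meas_ratio A m (gram x - gram y)" if "cadj x ** y = 0" "norm (x, y) = 1"
      for x y :: "complex^'r^'n"
      using that bound[of "(x, y)"] by (simp add: T_def h_def)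
  qed
qed

lemma meas_ratio_lower_bound:
  assumes inj: "beta_injective A m TYPE('r)"
  obtains c where "c > 0" and "\<And>(x::complex^'r^'n) (y::complex^'r^'n). gram x \<noteq> gram y
      \<Longrightarrow> c \<le> meas_ratio A m (gram x - gram y)"
proof -
  obtain c where c: "c > 0" and bound: "\<And>(x::complex^'r^'n) (y::complex^'r^'n).
      cadj x ** y = 0 \<Longrightarrow> norm (x, y) = 1 \<Longrightarrow> c \<le> meas_ratio A m (gram x - gram y)"
    using meas_ratio_lower_bound_orth_sphere[OF inj] by blast
  have "c \<le> meas_ratio A m (gram x - gram y)" if "gram x \<noteq> gram y" for x y :: "complex^'r^'n"
  proof -
    obtain x' y' :: "complex^'r^'n"
      where fiber: "gram x' - gram y' = gram x - gram y" and orth: "cadj x' ** y' = 0"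
      by (rule gram_diff_orth_representative)
    define t where "t = 1 / norm (x', y')"
    have "(x', y') \<noteq> 0" using fiber that by (auto simp: zero_prod_def)
    then have t: "t \<noteq> 0" and unit: "norm (t *\<^sub>R x', t *\<^sub>R y') = 1"
      by (simp_all add: t_def flip: scaleR_Pair)
    have "cadj (t *\<^sub>R x') ** (t *\<^sub>R y') = 0"
      using orth by (simp add: cadj_scaleR matrix_scalar_ac flip: scalar_matrix_assoc)
    then have "c \<le> meas_ratio A m (gram (t *\<^sub>R x') - gram (t *\<^sub>R y'))"
      using unit by (rule bound)
    also have "\<dots> = meas_ratio A m (gram x - gram y)"
      using t fiber by (simp add: gram_scaleR meas_ratio_scaleR flip: scaleR_diff_right)
    finally show ?thesis .
  qed
  with c show thesis by (rule that)
qed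

theorem proposition4p1:
  fixes A :: "nat \<Rightarrow> complex^'n^'n" and m :: nat
  assumes herm: "\<And>j. j < m \<Longrightarrow> hermitian (A j)"
    and nr: "CARD('r::finite) \<le> CARD('n::finite)"
    and inj: "beta_injective A m TYPE('r)"
  shows "Inf {(\<Sum>j<m. (beta A j x - beta A j y)\<^sup>2) / frob_sq (x ** cadj x - y ** cadj y) |
               (x::complex^'r^'n) (y::complex^'r^'n). x ** cadj x \<noteq> y ** cadj y} > 0"
proof -
  obtain c where c: "c > 0" and bound: "\<And>(x::complex^'r^'n) (y::complex^'r^'n). gram x \<noteq> gram y
      \<Longrightarrow> c \<le> meas_ratio A m (gram x - gram y)"
    using meas_ratio_lower_bound[OF inj] by blast
  let ?S = "{(\<Sum>j<m. (beta A j x - beta A j y)\<^sup>2) / frob_sq (x ** cadj x - y ** cadj y) |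
               (x::complex^'r^'n) (y::complex^'r^'n). x ** cadj x \<noteq> y ** cadj y}"
  have S: "?S = {meas_ratio A m (gram x - gram y) |
                   (x::complex^'r^'n) (y::complex^'r^'n). gram x \<noteq> gram y}"
    by (simp add: beta_diff frob_sq_eq_power2_norm meas_ratio_def gram_def)
  have "gram (1::complex^'r^'n) \<noteq> gram 0" by simp
  then have "?S \<noteq> {}" unfolding S by blast
  moreover have "c \<le> v" if "v \<in> ?S" for v
    using that bound unfolding S by blast
  ultimately have "c \<le> Inf ?S" by (rule cInf_greatest)
  with c show ?thesis by linarith
qed

end
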